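(* Let $d\ge1$, $D>0$, $\sigma\ge0$, $\alpha\in[0,1)$, $\rho>0$. Let $w^*\in\mathbb{R}^d$ with $\|w^*\|\le D$, and let $(x,\epsilon,b)$ be mutually independent random variables with $x\in\mathbb{R}^d$, $\|x\|\le1$ a.s., $\Sigma:=\mathbb{E}[(x-\mathbb{E}x)(x-\mathbb{E}x)^T]\succeq\rho I$, $\epsilon\in\mathbb{R}$, $|\epsilon|\le\sigma$ a.s., $\mathbb{E}\epsilon=0$, $b\in\mathbb{R}$, $\mathbb{P}(b\ne0)=\alpha$. Let $v,q\in\mathbb{R}^d$ with $\|v\|,\|q\|\le1$, let $R=6D+\sigma$, and define $$G_R(w):=\mathbb{E}_{x,\epsilon,b}\big[h_R(\langle w-w^*,x-v\rangle-\langle w^*,q\rangle-\epsilon-b)\big].$$ Then $G_R$ is $(1-\alpha)\rho$-strongly convex on $\mathcal W$. Furthermore, if $v=\mathbb{E}[x]$, then $w^*=\arg\min_{w\in\mathcal W}G_R(w)$.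
   Context: $\mathcal W=\{w\in\mathbb{R}^d:\|w\|\le D\}$. The Huber loss is $h_R(s)=\frac12s^2$ if $|s|\le R$ and $h_R(s)=R(|s|-\frac12R)$ otherwise. A function $f$ is $\lambda$-strongly convex on a convex set $\mathcal W$ if $w\mapsto f(w)-\frac\lambda2\|w\|^2$ is convex on $\mathcal W$. *)

theory Defs
  imports "HOL-Probability.Probability"
begin

definition huber :: "real \<Rightarrow> real \<Rightarrow> real" where
  "huber R s = (if \<bar>s\<bar> \<le> R then s\<^sup>2 / 2 else R * (\<bar>s\<bar> - R / 2))"

definition strongly_convex_on :: "'a::real_normed_vector set \<Rightarrow> real \<Rightarrow> ('a \<Rightarrow> real) \<Rightarrow> bool" where
  "strongly_convex_on W lam f \<longleftrightarrow> convex_on W (\<lambda>w. f w - lam / 2 * (norm w)\<^sup>2)"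

definition mutually_indep3 ::
  "'s measure \<Rightarrow> ('s \<Rightarrow> 'a::topological_space) \<Rightarrow> ('s \<Rightarrow> 'b::topological_space)
     \<Rightarrow> ('s \<Rightarrow> 'c::topological_space) \<Rightarrow> bool" where
  "mutually_indep3 M X Y Z \<longleftrightarrow>
     (\<forall>A\<in>sets borel. \<forall>B\<in>sets borel. \<forall>C\<in>sets borel.
        measure M {\<omega>\<in>space M. X \<omega> \<in> A \<and> Y \<omega> \<in> B \<and> Z \<omega> \<in> C}
        = measure M {\<omega>\<in>space M. X \<omega> \<in> A} * measure M {\<omega>\<in>space M. Y \<omega> \<in> B}
          * measure M {\<omega>\<in>space M. Z \<omega> \<in> C})"

end

theory Submission
  imports Defs
begin

(* On the event b = 0, which has probability 1 - \<alpha>, every argument of h_R that occurs for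
   w in W has absolute value at most 5D + \<sigma> \<le> R, so h_R is the quadratic s\<^sup>2/2 there; elsewhere
   it is merely convex.  Pointwise, the loss at a convex combination of w1, w2 therefore falls
   short of the combination of losses by (1 - t) t / 2 <w1 - w2, x - v>\<^sup>2 1{b = 0}.  Since x and b
   are independent, the expectation of this defect is (1 - \<alpha>) E <w1 - w2, x - v>\<^sup>2, and a second
   moment about v dominates the variance, which is at least \<rho> |w1 - w2|\<^sup>2.
   For the minimiser, the subgradient inequality h_R (s + p) \<ge> h_R s + h_R' s p, improved by p\<^sup>2/2
   on b = 0, at s = -<w*, q> - \<epsilon> - b gives
   G w \<ge> G w* + E [<w - w*, x - E x> h_R' s] + (1 - \<alpha>) \<rho> / 2 |w - w*|\<^sup>2,
   and the middle term vanishes because x is independent of (\<epsilon>, b). *)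

section \<open>The Huber loss\<close>

definition huber_deriv :: "real \<Rightarrow> real \<Rightarrow> real" where
  "huber_deriv R s = max (- R) (min R s)"

lemma abs_huber_deriv_le: "0 \<le> R \<Longrightarrow> \<bar>huber_deriv R s\<bar> \<le> R"
  by (auto simp: huber_deriv_def)

lemma huber_eq_quadratic: "\<bar>s\<bar> \<le> R \<Longrightarrow> huber R s = s\<^sup>2 / 2"
  by (simp add: huber_def)

lemma huber_deriv_eq_self: "\<bar>s\<bar> \<le> R \<Longrightarrow> huber_deriv R s = s"
  by (auto simp: huber_deriv_def abs_le_iff)

(* Fenchel-Young for h_R, the conjugate of a\<^sup>2/2 restricted to |a| \<le> R; equality holds at
   a = huber_deriv R s (huber_eq_huber_deriv). *)
lemma huber_ge_affine:
  assumes "\<bar>a\<bar> \<le> R"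
  shows "a * s - a\<^sup>2 / 2 \<le> huber R s"
proof (cases "\<bar>s\<bar> \<le> R")
  case True
  have "0 \<le> (s - a)\<^sup>2 / 2" by simp
  then show ?thesis using True by (simp add: huber_def power2_eq_square algebra_simps)
next
  case False
  have "a * s - a\<^sup>2 / 2 \<le> \<bar>a\<bar> * \<bar>s\<bar> - a\<^sup>2 / 2"
    by (simp add: abs_mult[symmetric])
  also have "\<dots> \<le> R * \<bar>s\<bar> - R\<^sup>2 / 2"
  proof -
    have "0 \<le> (R - \<bar>a\<bar>) * (\<bar>s\<bar> - (R + \<bar>a\<bar>) / 2)"
      using False assms by (intro mult_nonneg_nonneg) auto
    then show ?thesis by (simp add: power2_eq_square algebra_simps) argo
  qed
  also have "\<dots> = huber R s"
    using False by (simp add: huber_def power2_eq_square algebra_simps)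
  finally show ?thesis .
qed

lemma huber_eq_huber_deriv:
  "0 \<le> R \<Longrightarrow> huber R s = huber_deriv R s * s - (huber_deriv R s)\<^sup>2 / 2"
  by (auto simp: huber_def huber_deriv_def power2_eq_square algebra_simps abs_if max_def min_def)

lemma huber_subgradient:
  assumes "0 \<le> R"
  shows "huber R s + huber_deriv R s * p \<le> huber R (s + p)"
  using huber_ge_affine[OF abs_huber_deriv_le[OF assms, of s], of "s + p"]
    huber_eq_huber_deriv[OF assms, of s]
  by (simp add: algebra_simps)

lemma huber_add_quadratic:
  assumes "\<bar>s\<bar> \<le> R" "\<bar>s + p\<bar> \<le> R"
  shows "huber R (s + p) = huber R s + huber_deriv R s * p + p\<^sup>2 / 2"
  using assms by (simp add: huber_eq_quadratic huber_deriv_eq_self power2_eq_square algebra_simps)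

lemma convex_on_huber:
  assumes "0 \<le> R"
  shows "convex_on UNIV (huber R)"
proof (rule convex_onI)
  fix t s1 s2 :: real
  assume "0 < t" "t < 1"
  define a where "a = huber_deriv R ((1 - t) * s1 + t * s2)"
  have a: "\<bar>a\<bar> \<le> R" unfolding a_def by (rule abs_huber_deriv_le[OF assms])
  have "huber R ((1 - t) * s1 + t * s2) = a * ((1 - t) * s1 + t * s2) - a\<^sup>2 / 2"
    unfolding a_def by (rule huber_eq_huber_deriv[OF assms])
  also have "\<dots> = (1 - t) * (a * s1 - a\<^sup>2 / 2) + t * (a * s2 - a\<^sup>2 / 2)"
    by (simp add: field_simps)
  also have "\<dots> \<le> (1 - t) * huber R s1 + t * huber R s2"
    using huber_ge_affine[OF a] \<open>t < 1\<close> \<open>0 < t\<close> by (intro add_mono mult_left_mono) auto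
  finally show "huber R ((1 - t) *\<^sub>R s1 + t *\<^sub>R s2) \<le> (1 - t) * huber R s1 + t * huber R s2"
    by simp
qed simp

lemma huber_convex_comb_quadratic:
  assumes "\<bar>s1\<bar> \<le> R" "\<bar>s2\<bar> \<le> R" "0 \<le> t" "t \<le> 1"
  shows "huber R ((1 - t) * s1 + t * s2) + (1 - t) * t / 2 * (s1 - s2)\<^sup>2
    = (1 - t) * huber R s1 + t * huber R s2"
proof -
  have "\<bar>(1 - t) * s1\<bar> \<le> (1 - t) * R" "\<bar>t * s2\<bar> \<le> t * R"
    using assms by (simp_all add: abs_mult mult_left_mono)
  then have "\<bar>(1 - t) * s1 + t * s2\<bar> \<le> R"
    using abs_triangle_ineq[of "(1 - t) * s1" "t * s2"] by (simp add: algebra_simps)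
  then have "huber R ((1 - t) * s1 + t * s2) = ((1 - t) * s1 + t * s2)\<^sup>2 / 2"
    by (rule huber_eq_quadratic)
  then show ?thesis
    using assms by (simp add: huber_eq_quadratic power2_eq_square field_simps)
qed

lemma norm_convex_comb_power2:
  fixes w1 w2 :: "'a::real_inner" and t :: real
  shows "(norm ((1 - t) *\<^sub>R w1 + t *\<^sub>R w2))\<^sup>2
    = (1 - t) * (norm w1)\<^sup>2 + t * (norm w2)\<^sup>2 - (1 - t) * t * (norm (w1 - w2))\<^sup>2"
  by (simp add: power2_norm_eq_inner inner_add_left inner_add_right inner_diff_left
      inner_diff_right inner_commute algebra_simps)

lemma strongly_convex_onI:
  fixes G :: "'a::real_inner \<Rightarrow> real"
  assumes "convex W"
    and "\<And>w1 w2 t. w1 \<in> W \<Longrightarrow> w2 \<in> W \<Longrightarrow> 0 < t \<Longrightarrow> t < 1 \<Longrightarrow>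
      G ((1 - t) *\<^sub>R w1 + t *\<^sub>R w2) + (1 - t) * t / 2 * (lam * (norm (w1 - w2))\<^sup>2)
        \<le> (1 - t) * G w1 + t * G w2"
  shows "strongly_convex_on W lam G"
  unfolding strongly_convex_on_def
proof (rule convex_onI[OF _ assms(1)])
  fix t :: real and w1 w2 assume "0 < t" "t < 1" "w1 \<in> W" "w2 \<in> W"
  have "lam / 2 * (norm ((1 - t) *\<^sub>R w1 + t *\<^sub>R w2))\<^sup>2
      = (1 - t) * (lam / 2 * (norm w1)\<^sup>2) + t * (lam / 2 * (norm w2)\<^sup>2)
        - (1 - t) * t / 2 * (lam * (norm (w1 - w2))\<^sup>2)"
    unfolding norm_convex_comb_power2 by (simp add: field_simps)
  then show "G ((1 - t) *\<^sub>R w1 + t *\<^sub>R w2) - lam / 2 * (norm ((1 - t) *\<^sub>R w1 + t *\<^sub>R w2))\<^sup>2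
      \<le> (1 - t) * (G w1 - lam / 2 * (norm w1)\<^sup>2) + t * (G w2 - lam / 2 * (norm w2)\<^sup>2)"
    using assms(2)[OF \<open>w1 \<in> W\<close> \<open>w2 \<in> W\<close> \<open>0 < t\<close> \<open>t < 1\<close>]
    by (simp only: right_diff_distrib)
qed

lemma argmin_eq_singleton_of_quadratic_growth:
  fixes G :: "'a::real_normed_vector \<Rightarrow> real"
  assumes "c \<in> W" "0 < lam" "\<And>w. w \<in> W \<Longrightarrow> G c + lam / 2 * (norm (w - c))\<^sup>2 \<le> G w"
  shows "{w\<in>W. \<forall>u\<in>W. G w \<le> G u} = {c}"
proof (intro equalityI subsetI)
  fix w assume "w \<in> {w\<in>W. \<forall>u\<in>W. G w \<le> G u}"
  then have "lam / 2 * (norm (w - c))\<^sup>2 \<le> 0"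
    using assms by force
  then show "w \<in> {c}"
    using \<open>0 < lam\<close> by (simp add: mult_le_0_iff)
next
  fix w assume "w \<in> {c}"
  moreover have "G c \<le> G u" if "u \<in> W" for u
  proof -
    have "0 \<le> lam / 2 * (norm (u - c))\<^sup>2"
      using \<open>0 < lam\<close> by simp
    then show ?thesis
      using assms(3)[OF that] by linarith
  qed
  ultimately show "w \<in> {w\<in>W. \<forall>u\<in>W. G w \<le> G u}"
    using \<open>c \<in> W\<close> by blast
qed

section \<open>Strong convexity of an expected Huber loss\<close>

lemma (in prob_space) strongly_convex_on_expected_huber:
  fixes y :: "'a \<Rightarrow> 'b::real_inner" and k :: "'a \<Rightarrow> real"
  assumes W: "convex W" and R: "0 \<le> R"
    and int_loss: "\<And>w. w \<in> W \<Longrightarrow> integrable M (\<lambda>\<omega>. huber R ((w - c) \<bullet> y \<omega> - k \<omega>))"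
    and int_sq: "\<And>d. integrable M (\<lambda>\<omega>. (d \<bullet> y \<omega>)\<^sup>2 * indicator E \<omega>)"
    and curvature: "\<And>d. lam * (norm d)\<^sup>2 \<le> (\<integral>\<omega>. (d \<bullet> y \<omega>)\<^sup>2 * indicator E \<omega> \<partial>M)"
    and quadratic_regime: "AE \<omega> in M. \<omega> \<in> E \<longrightarrow> (\<forall>w\<in>W. \<bar>(w - c) \<bullet> y \<omega> - k \<omega>\<bar> \<le> R)"
  shows "strongly_convex_on W lam (\<lambda>w. \<integral>\<omega>. huber R ((w - c) \<bullet> y \<omega> - k \<omega>) \<partial>M)"
proof (rule strongly_convex_onI[OF W])
  fix w1 w2 and t :: real
  assume w: "w1 \<in> W" "w2 \<in> W" and t: "0 < t" "t < 1"
  define wt where "wt = (1 - t) *\<^sub>R w1 + t *\<^sub>R w2"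
  define s where "s w \<omega> = (w - c) \<bullet> y \<omega> - k \<omega>" for w \<omega>
  have "wt \<in> W"
    using convexD[OF W w, of "1 - t" t] t unfolding wt_def by simp
  have s_wt: "s wt \<omega> = (1 - t) * s w1 \<omega> + t * s w2 \<omega>" for \<omega>
    unfolding s_def wt_def by (simp add: inner_add_left inner_diff_left algebra_simps)
  have s_diff: "(w1 - w2) \<bullet> y \<omega> = s w1 \<omega> - s w2 \<omega>" for \<omega>
    unfolding s_def by (simp add: inner_diff_left)
  have "AE \<omega> in M. huber R (s wt \<omega>) + (1 - t) * t / 2 * (((w1 - w2) \<bullet> y \<omega>)\<^sup>2 * indicator E \<omega>)
      \<le> (1 - t) * huber R (s w1 \<omega>) + t * huber R (s w2 \<omega>)"
    using quadratic_regime
  proof eventually_elim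
    case (elim \<omega>)
    show ?case
    proof (cases "\<omega> \<in> E")
      case True
      then show ?thesis
        using elim w t huber_convex_comb_quadratic[of "s w1 \<omega>" R "s w2 \<omega>" t]
        unfolding s_wt s_diff by (simp add: s_def)
    next
      case False
      then show ?thesis
        using convex_onD[OF convex_on_huber[OF R], of t "s w1 \<omega>" "s w2 \<omega>"] t
        unfolding s_wt by simp
    qed
  qed
  then have "(\<integral>\<omega>. huber R (s wt \<omega>) + (1 - t) * t / 2 * (((w1 - w2) \<bullet> y \<omega>)\<^sup>2 * indicator E \<omega>) \<partial>M)
      \<le> (\<integral>\<omega>. (1 - t) * huber R (s w1 \<omega>) + t * huber R (s w2 \<omega>) \<partial>M)"
    using int_loss w \<open>wt \<in> W\<close> int_sq unfolding s_def by (intro integral_mono_AE) auto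
  moreover have "(1 - t) * t / 2 * (lam * (norm (w1 - w2))\<^sup>2)
      \<le> (1 - t) * t / 2 * (\<integral>\<omega>. ((w1 - w2) \<bullet> y \<omega>)\<^sup>2 * indicator E \<omega> \<partial>M)"
    using curvature t by (intro mult_left_mono) auto
  ultimately show "(\<lambda>w. \<integral>\<omega>. huber R ((w - c) \<bullet> y \<omega> - k \<omega>) \<partial>M) wt
      + (1 - t) * t / 2 * (lam * (norm (w1 - w2))\<^sup>2)
      \<le> (1 - t) * (\<lambda>w. \<integral>\<omega>. huber R ((w - c) \<bullet> y \<omega> - k \<omega>) \<partial>M) w1
        + t * (\<lambda>w. \<integral>\<omega>. huber R ((w - c) \<bullet> y \<omega> - k \<omega>) \<partial>M) w2"
    using int_loss w \<open>wt \<in> W\<close> int_sq unfolding s_def wt_def by simp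
qed

lemma (in prob_space) expected_huber_quadratic_growth:
  fixes y :: "'a \<Rightarrow> 'b::real_inner" and k :: "'a \<Rightarrow> real"
  assumes R: "0 \<le> R" and "c \<in> W" "w \<in> W"
    and int_loss: "\<And>w. w \<in> W \<Longrightarrow> integrable M (\<lambda>\<omega>. huber R ((w - c) \<bullet> y \<omega> - k \<omega>))"
    and int_sq: "\<And>d. integrable M (\<lambda>\<omega>. (d \<bullet> y \<omega>)\<^sup>2 * indicator E \<omega>)"
    and curvature: "\<And>d. lam * (norm d)\<^sup>2 \<le> (\<integral>\<omega>. (d \<bullet> y \<omega>)\<^sup>2 * indicator E \<omega> \<partial>M)"
    and quadratic_regime: "AE \<omega> in M. \<omega> \<in> E \<longrightarrow> (\<forall>w\<in>W. \<bar>(w - c) \<bullet> y \<omega> - k \<omega>\<bar> \<le> R)"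
    and int_grad: "\<And>d. integrable M (\<lambda>\<omega>. (d \<bullet> y \<omega>) * huber_deriv R (- k \<omega>))"
    and grad: "\<And>d. (\<integral>\<omega>. (d \<bullet> y \<omega>) * huber_deriv R (- k \<omega>) \<partial>M) = 0"
  shows "(\<integral>\<omega>. huber R (- k \<omega>) \<partial>M) + lam / 2 * (norm (w - c))\<^sup>2
    \<le> (\<integral>\<omega>. huber R ((w - c) \<bullet> y \<omega> - k \<omega>) \<partial>M)"
proof -
  define p where "p \<omega> = (w - c) \<bullet> y \<omega>" for \<omega>
  have "AE \<omega> in M. huber R (- k \<omega>) + p \<omega> * huber_deriv R (- k \<omega>) + 1 / 2 * ((p \<omega>)\<^sup>2 * indicator E \<omega>)
      \<le> huber R (p \<omega> - k \<omega>)"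
    using quadratic_regime
  proof eventually_elim
    case (elim \<omega>)
    show ?case
    proof (cases "\<omega> \<in> E")
      case True
      then have "\<bar>- k \<omega>\<bar> \<le> R" "\<bar>- k \<omega> + p \<omega>\<bar> \<le> R"
        using elim \<open>c \<in> W\<close> \<open>w \<in> W\<close> unfolding p_def by force+
      from huber_add_quadratic[OF this] show ?thesis
        using True by (simp add: algebra_simps)
    next
      case False
      then show ?thesis
        using huber_subgradient[OF R, of "- k \<omega>" "p \<omega>"] by (simp add: algebra_simps)
    qed
  qed
  moreover have "integrable M (\<lambda>\<omega>. huber R (- k \<omega>))"
    using int_loss[OF \<open>c \<in> W\<close>] by simp
  ultimately have "(\<integral>\<omega>. huber R (- k \<omega>) + p \<omega> * huber_deriv R (- k \<omega>)
        + 1 / 2 * ((p \<omega>)\<^sup>2 * indicator E \<omega>) \<partial>M)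
      \<le> (\<integral>\<omega>. huber R (p \<omega> - k \<omega>) \<partial>M)"
    using int_loss[OF \<open>w \<in> W\<close>] int_sq int_grad unfolding p_def by (intro integral_mono_AE) auto
  then have "(\<integral>\<omega>. huber R (- k \<omega>) \<partial>M) + 1 / 2 * (\<integral>\<omega>. (p \<omega>)\<^sup>2 * indicator E \<omega> \<partial>M)
      \<le> (\<integral>\<omega>. huber R (p \<omega> - k \<omega>) \<partial>M)"
    using \<open>integrable M (\<lambda>\<omega>. huber R (- k \<omega>))\<close> int_sq int_grad grad unfolding p_def by simp
  then show ?thesis
    using curvature[of "w - c"] unfolding p_def by simp
qed

section \<open>Independence and second moments\<close>

lemma Int_stable_vimage:
  assumes "Int_stable G"
  shows "Int_stable {f -` S \<inter> \<Omega> | S. S \<in> G}"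
proof (rule Int_stableI)
  fix a b assume "a \<in> {f -` S \<inter> \<Omega> | S. S \<in> G}" "b \<in> {f -` S \<inter> \<Omega> | S. S \<in> G}"
  then obtain S T where "S \<in> G" "T \<in> G" "a = f -` S \<inter> \<Omega>" "b = f -` T \<inter> \<Omega>"
    by blast
  then show "a \<inter> b \<in> {f -` S \<inter> \<Omega> | S. S \<in> G}"
    using Int_stableD[OF assms] by (intro CollectI exI[of _ "S \<inter> T"]) auto
qed

lemma (in prob_space) indep_set_subset:
  "indep_set A B \<Longrightarrow> A' \<subseteq> A \<Longrightarrow> B' \<subseteq> B \<Longrightarrow> indep_set A' B'"
  unfolding indep_sets2_eq by blast

lemma (in prob_space) indep_set_rectangles_of_mutually_indep3:
  fixes X :: "'a \<Rightarrow> 'b::topological_space" and Y :: "'a \<Rightarrow> 'c::topological_space"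
    and Z :: "'a \<Rightarrow> 'd::topological_space"
  assumes indep: "mutually_indep3 M X Y Z"
    and [measurable]: "X \<in> borel_measurable M" "Y \<in> borel_measurable M" "Z \<in> borel_measurable M"
  shows "indep_set {X -` A \<inter> space M | A. A \<in> sets borel}
    {(\<lambda>\<omega>. (Y \<omega>, Z \<omega>)) -` S \<inter> space M | S. S \<in> {B \<times> C | B C. B \<in> sets borel \<and> C \<in> sets borel}}"
  unfolding indep_sets2_eq
proof (intro conjI ballI)
  show "{X -` A \<inter> space M | A. A \<in> sets borel} \<subseteq> events"
    "{(\<lambda>\<omega>. (Y \<omega>, Z \<omega>)) -` S \<inter> space M | S. S \<in> {B \<times> C | B C. B \<in> sets borel \<and> C \<in> sets borel}}
      \<subseteq> events"
    by auto
  have joint: "\<And>A B C. A \<in> sets borel \<Longrightarrow> B \<in> sets borel \<Longrightarrow> C \<in> sets borel \<Longrightarrow>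
      prob {\<omega>\<in>space M. X \<omega> \<in> A \<and> Y \<omega> \<in> B \<and> Z \<omega> \<in> C}
      = prob {\<omega>\<in>space M. X \<omega> \<in> A} * prob {\<omega>\<in>space M. Y \<omega> \<in> B} * prob {\<omega>\<in>space M. Z \<omega> \<in> C}"
    using indep unfolding mutually_indep3_def by blast
  fix a s
  assume "a \<in> {X -` A \<inter> space M | A. A \<in> sets borel}"
    and "s \<in> {(\<lambda>\<omega>. (Y \<omega>, Z \<omega>)) -` S \<inter> space M | S. S \<in> {B \<times> C | B C. B \<in> sets borel \<and> C \<in> sets borel}}"
  then obtain A B C where ABC: "A \<in> sets borel" "B \<in> sets borel" "C \<in> sets borel"
    and a: "a = {\<omega>\<in>space M. X \<omega> \<in> A}"
    and s: "s = {\<omega>\<in>space M. X \<omega> \<in> UNIV \<and> Y \<omega> \<in> B \<and> Z \<omega> \<in> C}"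
    by blast
  have "a \<inter> s = {\<omega>\<in>space M. X \<omega> \<in> A \<and> Y \<omega> \<in> B \<and> Z \<omega> \<in> C}"
    unfolding a s by auto
  moreover have "prob s = prob {\<omega>\<in>space M. Y \<omega> \<in> B} * prob {\<omega>\<in>space M. Z \<omega> \<in> C}"
    using joint[of UNIV B C] ABC unfolding s by (simp add: prob_space)
  ultimately show "prob (a \<inter> s) = prob a * prob s"
    using joint[OF ABC] unfolding a by simp
qed

lemma (in prob_space) indep_var_of_mutually_indep3:
  fixes X :: "'a \<Rightarrow> 'b::topological_space" and Y :: "'a \<Rightarrow> 'c::topological_space"
    and Z :: "'a \<Rightarrow> 'd::topological_space" and f :: "'b \<Rightarrow> 'e::topological_space"
  assumes indep: "mutually_indep3 M X Y Z"
    and [measurable]: "X \<in> borel_measurable M" "Y \<in> borel_measurable M" "Z \<in> borel_measurable M"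
      "f \<in> borel_measurable borel" "g \<in> borel_measurable (borel \<Otimes>\<^sub>M borel)"
  shows "indep_var borel (\<lambda>\<omega>. f (X \<omega>)) borel (\<lambda>\<omega>. g (Y \<omega>, Z \<omega>))"
proof -
  define YZ where "YZ = (\<lambda>\<omega>. (Y \<omega>, Z \<omega>))"
  define rect where "rect = {B \<times> C | B C. B \<in> sets (borel :: 'c measure) \<and> C \<in> sets (borel :: 'd measure)}"
  let ?A = "{X -` A \<inter> space M | A. A \<in> sets borel}"
  let ?B = "{YZ -` S \<inter> space M | S. S \<in> rect}"
  have "Int_stable ?A"
    by (rule Int_stable_vimage[OF sets.Int_stable])
  moreover have "Int_stable ?B"
    unfolding rect_def by (rule Int_stable_vimage[OF Int_stable_pair_measure_generator])
  ultimately have indep_gen: "indep_set (sigma_sets (space M) ?A) (sigma_sets (space M) ?B)"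
    using indep_set_rectangles_of_mutually_indep3[OF assms(1-4)] unfolding YZ_def rect_def
    by (intro indep_set_sigma_sets)
  have "(\<lambda>\<omega>. f (X \<omega>)) -` S \<inter> space M \<in> ?A" if "S \<in> sets borel" for S
  proof -
    have "f -` S \<in> sets borel"
      using that by (rule measurable_sets_borel[OF assms(5)])
    then show ?thesis
      by (auto intro!: exI[of _ "f -` S"])
  qed
  then have sub_f: "sigma_sets (space M) {(\<lambda>\<omega>. f (X \<omega>)) -` S \<inter> space M | S. S \<in> sets borel}
      \<subseteq> sigma_sets (space M) ?A"
    by (intro sigma_sets_mono') blast
  have "sets (borel \<Otimes>\<^sub>M borel) = sigma_sets UNIV rect"
    unfolding rect_def sets_pair_measure by simp
  then have "{YZ -` S \<inter> space M | S. S \<in> sets (borel \<Otimes>\<^sub>M borel)} = sigma_sets (space M) ?B"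
    using sigma_sets_vimage_commute[of YZ "space M" UNIV rect] by simp
  moreover have "(\<lambda>\<omega>. g (Y \<omega>, Z \<omega>)) -` S \<inter> space M
      \<in> {YZ -` T \<inter> space M | T. T \<in> sets (borel \<Otimes>\<^sub>M borel)}" if "S \<in> sets borel" for S
  proof -
    have "g -` S \<in> sets (borel \<Otimes>\<^sub>M borel)"
      using measurable_sets[OF assms(6) that] by (simp add: space_pair_measure)
    then show ?thesis
      unfolding YZ_def by (auto intro!: exI[of _ "g -` S"])
  qed
  ultimately have sub_g: "sigma_sets (space M) {(\<lambda>\<omega>. g (Y \<omega>, Z \<omega>)) -` S \<inter> space M | S. S \<in> sets borel}
      \<subseteq> sigma_sets (space M) ?B"
    by (intro sigma_sets_mono) auto
  show ?thesis
    unfolding indep_var_eq using indep_set_subset[OF indep_gen sub_f sub_g] by simp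
qed

lemma (in prob_space) variance_le_integral_power2_diff:
  fixes Y :: "'a \<Rightarrow> real"
  assumes [simp]: "integrable M Y" "integrable M (\<lambda>\<omega>. (Y \<omega>)\<^sup>2)"
  shows "variance Y \<le> (\<integral>\<omega>. (Y \<omega> - c)\<^sup>2 \<partial>M)"
proof -
  have "(\<integral>\<omega>. (Y \<omega> - c)\<^sup>2 \<partial>M) = (\<integral>\<omega>. (Y \<omega>)\<^sup>2 \<partial>M) - 2 * expectation Y * c + c\<^sup>2"
    by (simp add: power2_diff prob_space)
  moreover have "0 \<le> (expectation Y)\<^sup>2 + c\<^sup>2 - 2 * expectation Y * c"
    using zero_le_power2[of "expectation Y - c"] unfolding power2_diff .
  ultimately show ?thesis
    using variance_eq[OF assms] by linarith
qed

lemma abs_inner_diff_le: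
  fixes d y v :: "'a::real_inner"
  assumes "norm y \<le> B"
  shows "\<bar>d \<bullet> (y - v)\<bar> \<le> norm d * (B + norm v)"
proof -
  have "\<bar>d \<bullet> (y - v)\<bar> \<le> norm d * norm (y - v)"
    by (rule Cauchy_Schwarz_ineq2)
  also have "\<dots> \<le> norm d * (B + norm v)"
    using assms norm_triangle_ineq4[of y v] by (intro mult_left_mono) auto
  finally show ?thesis .
qed

lemma (in prob_space)
  fixes x :: "'a \<Rightarrow> 'b::euclidean_space"
  assumes "x \<in> borel_measurable M" "AE \<omega> in M. norm (x \<omega>) \<le> B"
  shows integrable_inner_diff: "integrable M (\<lambda>\<omega>. d \<bullet> (x \<omega> - v))"
    and integrable_inner_diff_power2: "integrable M (\<lambda>\<omega>. (d \<bullet> (x \<omega> - v))\<^sup>2)"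
proof -
  have bound: "AE \<omega> in M. \<bar>d \<bullet> (x \<omega> - v)\<bar> \<le> norm d * (B + norm v)"
    using assms(2) by eventually_elim (rule abs_inner_diff_le)
  then show "integrable M (\<lambda>\<omega>. d \<bullet> (x \<omega> - v))"
    using assms(1) by (intro integrable_const_bound) auto
  have "AE \<omega> in M. norm ((d \<bullet> (x \<omega> - v))\<^sup>2) \<le> (norm d * (B + norm v))\<^sup>2"
    using bound by eventually_elim (simp add: abs_le_square_iff[symmetric])
  then show "integrable M (\<lambda>\<omega>. (d \<bullet> (x \<omega> - v))\<^sup>2)"
    using assms(1) by (intro integrable_const_bound) auto
qed

lemma (in prob_space) integral_inner_diff_power2_ge:
  fixes x :: "'a \<Rightarrow> 'b::euclidean_space"
  assumes [measurable]: "x \<in> borel_measurable M" and bounded: "AE \<omega> in M. norm (x \<omega>) \<le> B"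
    and cov: "\<rho> * (norm d)\<^sup>2 \<le> (\<integral>\<omega>. (d \<bullet> (x \<omega> - (\<integral>\<omega>'. x \<omega>' \<partial>M)))\<^sup>2 \<partial>M)"
  shows "\<rho> * (norm d)\<^sup>2 \<le> (\<integral>\<omega>. (d \<bullet> (x \<omega> - v))\<^sup>2 \<partial>M)"
proof -
  have "integrable M x"
    using bounded by (intro integrable_const_bound) auto
  then have "variance (\<lambda>\<omega>. d \<bullet> x \<omega>) = (\<integral>\<omega>. (d \<bullet> (x \<omega> - (\<integral>\<omega>'. x \<omega>' \<partial>M)))\<^sup>2 \<partial>M)"
    by (simp add: inner_diff_right)
  moreover have "variance (\<lambda>\<omega>. d \<bullet> x \<omega>) \<le> (\<integral>\<omega>. (d \<bullet> x \<omega> - d \<bullet> v)\<^sup>2 \<partial>M)"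
    using integrable_inner_diff[OF assms(1) bounded, of d 0]
      integrable_inner_diff_power2[OF assms(1) bounded, of d 0]
    by (intro variance_le_integral_power2_diff) simp_all
  ultimately show ?thesis
    using cov by (simp add: inner_diff_right)
qed

lemma (in prob_space)
  fixes x :: "'a \<Rightarrow> 'b::euclidean_space" and eps b :: "'a \<Rightarrow> real"
  assumes indep: "mutually_indep3 M x eps b"
    and [measurable]: "x \<in> borel_measurable M" "eps \<in> borel_measurable M" "b \<in> borel_measurable M"
    and bounded: "AE \<omega> in M. norm (x \<omega>) \<le> B"
    and cov: "\<rho> * (norm d)\<^sup>2 \<le> (\<integral>\<omega>. (d \<bullet> (x \<omega> - (\<integral>\<omega>'. x \<omega>' \<partial>M)))\<^sup>2 \<partial>M)"
  shows integral_inner_diff_power2_indicator_ge: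
      "(1 - prob {\<omega>\<in>space M. b \<omega> \<noteq> 0}) * \<rho> * (norm d)\<^sup>2
        \<le> (\<integral>\<omega>. (d \<bullet> (x \<omega> - v))\<^sup>2 * indicator (b -` {0}) \<omega> \<partial>M)"
    and integrable_inner_diff_power2_indicator:
      "integrable M (\<lambda>\<omega>. (d \<bullet> (x \<omega> - v))\<^sup>2 * indicator (b -` {0}) \<omega>)"
proof -
  have "(\<lambda>y. (d \<bullet> (y - v))\<^sup>2) \<in> borel_measurable borel"
    by measurable
  moreover have "(\<lambda>z::real \<times> real. indicator {0} (snd z) :: real) \<in> borel_measurable (borel \<Otimes>\<^sub>M borel)"
    using borel_closed[OF closed_singleton[of "0::real"]]
    by (intro measurable_compose[OF measurable_snd borel_measurable_indicator])
  ultimately have "indep_var borel (\<lambda>\<omega>. (d \<bullet> (x \<omega> - v))\<^sup>2) borel (\<lambda>\<omega>. indicator {0} (snd (eps \<omega>, b \<omega>)) :: real)"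
    by (rule indep_var_of_mutually_indep3[OF indep assms(2-4)])
  then have ind: "indep_var borel (\<lambda>\<omega>. (d \<bullet> (x \<omega> - v))\<^sup>2) borel (\<lambda>\<omega>. indicator {0} (b \<omega>) :: real)"
    by simp
  have int_ind: "integrable M (\<lambda>\<omega>. indicator {0} (b \<omega>) :: real)"
    by (intro integrable_const_bound[where B=1]) auto
  have contaminated: "{\<omega>\<in>space M. b \<omega> \<noteq> 0} \<in> events"
    by measurable
  have "(\<integral>\<omega>. indicator {0} (b \<omega>) \<partial>M) = (\<integral>\<omega>. indicator (space M - {\<omega>\<in>space M. b \<omega> \<noteq> 0}) \<omega> \<partial>M)"
    by (intro Bochner_Integration.integral_cong) (auto simp: indicator_def)
  also have "\<dots> = 1 - prob {\<omega>\<in>space M. b \<omega> \<noteq> 0}"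
    using contaminated by (simp add: prob_compl)
  finally have "(\<integral>\<omega>. (d \<bullet> (x \<omega> - v))\<^sup>2 * indicator (b -` {0}) \<omega> \<partial>M)
      = (1 - prob {\<omega>\<in>space M. b \<omega> \<noteq> 0}) * (\<integral>\<omega>. (d \<bullet> (x \<omega> - v))\<^sup>2 \<partial>M)"
    using indep_var_lebesgue_integral[OF ind integrable_inner_diff_power2[OF assms(2) bounded] int_ind]
    by (simp add: indicator_vimage)
  moreover have "\<rho> * (norm d)\<^sup>2 \<le> (\<integral>\<omega>. (d \<bullet> (x \<omega> - v))\<^sup>2 \<partial>M)"
    by (rule integral_inner_diff_power2_ge[OF assms(2) bounded cov])
  ultimately show "(1 - prob {\<omega>\<in>space M. b \<omega> \<noteq> 0}) * \<rho> * (norm d)\<^sup>2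
      \<le> (\<integral>\<omega>. (d \<bullet> (x \<omega> - v))\<^sup>2 * indicator (b -` {0}) \<omega> \<partial>M)"
    by (simp add: mult.assoc mult_left_mono)
  show "integrable M (\<lambda>\<omega>. (d \<bullet> (x \<omega> - v))\<^sup>2 * indicator (b -` {0}) \<omega>)"
    using indep_var_integrable[OF ind integrable_inner_diff_power2[OF assms(2) bounded] int_ind]
    by (simp add: indicator_vimage)
qed

lemma (in prob_space)
  fixes x :: "'a \<Rightarrow> 'b::euclidean_space" and eps b :: "'a \<Rightarrow> real" and g :: "real \<times> real \<Rightarrow> real"
  assumes indep: "mutually_indep3 M x eps b"
    and [measurable]: "x \<in> borel_measurable M" "eps \<in> borel_measurable M" "b \<in> borel_measurable M"
      "g \<in> borel_measurable (borel \<Otimes>\<^sub>M borel)"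
    and bounded: "AE \<omega> in M. norm (x \<omega>) \<le> B" and g_bounded: "\<And>z. \<bar>g z\<bar> \<le> C"
  shows integrable_inner_centered_mult:
      "integrable M (\<lambda>\<omega>. (d \<bullet> (x \<omega> - (\<integral>\<omega>'. x \<omega>' \<partial>M))) * g (eps \<omega>, b \<omega>))"
    and integral_inner_centered_mult_eq_0:
      "(\<integral>\<omega>. (d \<bullet> (x \<omega> - (\<integral>\<omega>'. x \<omega>' \<partial>M))) * g (eps \<omega>, b \<omega>) \<partial>M) = 0"
proof -
  let ?m = "\<integral>\<omega>'. x \<omega>' \<partial>M"
  have "(\<lambda>y. d \<bullet> (y - ?m)) \<in> borel_measurable borel"
    by measurable
  from indep_var_of_mutually_indep3[OF indep assms(2-4) this assms(5)]
  have ind: "indep_var borel (\<lambda>\<omega>. d \<bullet> (x \<omega> - ?m)) borel (\<lambda>\<omega>. g (eps \<omega>, b \<omega>))" .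
  have int_g: "integrable M (\<lambda>\<omega>. g (eps \<omega>, b \<omega>))"
    using g_bounded by (intro integrable_const_bound[where B=C]) auto
  have "integrable M x"
    using bounded by (intro integrable_const_bound) auto
  then have "(\<integral>\<omega>. d \<bullet> (x \<omega> - ?m) \<partial>M) = 0"
    by (simp add: inner_diff_right prob_space)
  then show "(\<integral>\<omega>. (d \<bullet> (x \<omega> - ?m)) * g (eps \<omega>, b \<omega>) \<partial>M) = 0"
    using indep_var_lebesgue_integral[OF ind integrable_inner_diff[OF assms(2) bounded] int_g] by simp
  show "integrable M (\<lambda>\<omega>. (d \<bullet> (x \<omega> - ?m)) * g (eps \<omega>, b \<omega>))"
    by (rule indep_var_integrable[OF ind integrable_inner_diff[OF assms(2) bounded] int_g])
qed

lemma abs_residual_le: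
  fixes w ws y v q :: "'a::real_inner"
  assumes "norm w \<le> D" "norm ws \<le> D" "norm y \<le> 1" "norm v \<le> 1" "norm q \<le> 1" "\<bar>e\<bar> \<le> \<sigma>"
  shows "\<bar>(w - ws) \<bullet> (y - v) - (ws \<bullet> q + e)\<bar> \<le> 5 * D + \<sigma>"
proof -
  have "0 \<le> D"
    using assms(2) norm_ge_zero order_trans by blast
  have "\<bar>(w - ws) \<bullet> (y - v)\<bar> \<le> norm (w - ws) * (1 + norm v)"
    by (rule abs_inner_diff_le[OF assms(3)])
  also have "\<dots> \<le> (2 * D) * 2"
    using assms(1,2,4) norm_triangle_ineq4[of w ws] \<open>0 \<le> D\<close> by (intro mult_mono) auto
  finally have "\<bar>(w - ws) \<bullet> (y - v)\<bar> \<le> 4 * D"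
    by simp
  moreover have "\<bar>ws \<bullet> q\<bar> \<le> D"
    using Cauchy_Schwarz_ineq2[of ws q] mult_mono[of "norm ws" D "norm q" 1] assms(2,5) \<open>0 \<le> D\<close>
    by simp
  ultimately show ?thesis
    using assms(6) by linarith
qed

theorem lemma10:
  fixes M :: "'s measure"
    and x :: "'s \<Rightarrow> 'a::euclidean_space" and eps b :: "'s \<Rightarrow> real"
    and ws v q :: 'a and D \<sigma> \<alpha> \<rho> R :: real and G :: "'a \<Rightarrow> real"
  assumes "prob_space M"
    and "D > 0" and "\<sigma> \<ge> 0" and "0 \<le> \<alpha>" and "\<alpha> < 1" and "\<rho> > 0"
    and "norm ws \<le> D"
    and "x \<in> borel_measurable M" and "eps \<in> borel_measurable M" and "b \<in> borel_measurable M"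
    and "mutually_indep3 M x eps b"
    and "AE \<omega> in M. norm (x \<omega>) \<le> 1"
    and "\<forall>u::'a. (\<integral>\<omega>. (u \<bullet> (x \<omega> - (\<integral>\<omega>'. x \<omega>' \<partial>M)))\<^sup>2 \<partial>M) \<ge> \<rho> * (norm u)\<^sup>2"
    and "AE \<omega> in M. \<bar>eps \<omega>\<bar> \<le> \<sigma>"
    and "(\<integral>\<omega>. eps \<omega> \<partial>M) = 0"
    and "measure M {\<omega>\<in>space M. b \<omega> \<noteq> 0} = \<alpha>"
    and "norm v \<le> 1" and "norm q \<le> 1"
    and "R = 6 * D + \<sigma>"
    and "G = (\<lambda>w. \<integral>\<omega>. huber R ((w - ws) \<bullet> (x \<omega> - v) - ws \<bullet> q - eps \<omega> - b \<omega>) \<partial>M)"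
    and "\<forall>w\<in>cball 0 D.
           integrable M (\<lambda>\<omega>. huber R ((w - ws) \<bullet> (x \<omega> - v) - ws \<bullet> q - eps \<omega> - b \<omega>))"
  shows "strongly_convex_on (cball 0 D) ((1 - \<alpha>) * \<rho>) G
         \<and> (v = (\<integral>\<omega>. x \<omega> \<partial>M) \<longrightarrow>
              {w\<in>cball 0 D. \<forall>u\<in>cball 0 D. G w \<le> G u} = {ws})"
proof -
  interpret prob_space M by fact
  let ?k = "\<lambda>\<omega>. ws \<bullet> q + eps \<omega> + b \<omega>"
  have R: "0 \<le> R" and ws: "ws \<in> cball 0 D" and lam: "0 < (1 - \<alpha>) * \<rho>"
    using assms(2,3,5,6,7,19) by auto
  have G: "G = (\<lambda>w. \<integral>\<omega>. huber R ((w - ws) \<bullet> (x \<omega> - v) - ?k \<omega>) \<partial>M)"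
    and int_loss: "\<And>w. w \<in> cball 0 D \<Longrightarrow> integrable M (\<lambda>\<omega>. huber R ((w - ws) \<bullet> (x \<omega> - v) - ?k \<omega>))"
    using assms(20,21) by (simp_all add: diff_diff_eq)
  have quadratic_regime: "AE \<omega> in M. \<omega> \<in> b -` {0} \<longrightarrow> (\<forall>w\<in>cball 0 D. \<bar>(w - ws) \<bullet> (x \<omega> - v) - ?k \<omega>\<bar> \<le> R)"
    using assms(12,14)
  proof eventually_elim
    case (elim \<omega>)
    then show ?case
      using abs_residual_le[of _ D ws "x \<omega>" v q "eps \<omega>" \<sigma>] assms(2,7,17,18,19) by force
  qed
  note curvature = integral_inner_diff_power2_indicator_ge[OF assms(11,8,9,10,12) assms(13)[rule_format],
      unfolded assms(16)]
    and int_sq = integrable_inner_diff_power2_indicator[OF assms(11,8,9,10,12) assms(13)[rule_format]]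
  have "strongly_convex_on (cball 0 D) ((1 - \<alpha>) * \<rho>) G"
    unfolding G using convex_cball R int_loss int_sq curvature quadratic_regime
    by (intro strongly_convex_on_expected_huber[where E = "b -` {0}"]) auto
  moreover have "{w\<in>cball 0 D. \<forall>u\<in>cball 0 D. G w \<le> G u} = {ws}" if "v = (\<integral>\<omega>. x \<omega> \<partial>M)"
  proof (rule argmin_eq_singleton_of_quadratic_growth[OF ws lam])
    let ?g = "\<lambda>z. huber_deriv R (- (ws \<bullet> q + fst z + snd z))"
    have "?g \<in> borel_measurable (borel \<Otimes>\<^sub>M borel)"
      unfolding huber_deriv_def by measurable
    note grad = integral_inner_centered_mult_eq_0[OF assms(11,8,9,10) this assms(12) abs_huber_deriv_le[OF R]]
      and int_grad = integrable_inner_centered_mult[OF assms(11,8,9,10) this assms(12) abs_huber_deriv_le[OF R]]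
    fix w :: 'a assume "w \<in> cball 0 D"
    then have "(\<integral>\<omega>. huber R (- ?k \<omega>) \<partial>M) + (1 - \<alpha>) * \<rho> / 2 * (norm (w - ws))\<^sup>2 \<le> G w"
      unfolding G using R ws int_loss int_sq curvature quadratic_regime grad int_grad that
      by (intro expected_huber_quadratic_growth[where E = "b -` {0}"]) auto
    then show "G ws + (1 - \<alpha>) * \<rho> / 2 * (norm (w - ws))\<^sup>2 \<le> G w"
      unfolding G by simp
  qed
  ultimately show ?thesis
    by blast
qed

end
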